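(* Let $\alpha$ be a strong composition of $r$ with $\ell(\alpha)\le n$. The map $\mathrm{wt}:\mathrm{QRT}(n,\alpha)\to\Lambda(n,r)_{\preceq\alpha^{\bullet}}$, $T\mapsto\mathrm{wt}(T)$, is a bijection.
   Context: A strong composition of $r$ is a sequence $\alpha=(\alpha_1,\dots,\alpha_k)$ of positive integers summing to $r$, with length $\ell(\alpha)=k$. For $\ell(\alpha)\le n$, $\alpha^\bullet\in\Lambda(n,r)$ is obtained by appending $n-k$ zeros. $\Lambda(n,r)$ is the set of weak compositions of $r$ with $n$ nonnegative parts. For $\mu,\lambda\in\Lambda(n,r)$, $\mu\preceq\lambda$ ($\mu$ refines $\lambda$) means $\mu$ is obtained by subdividing the parts of $\lambda$ in order. Precisely, if $\lambda=(\lambda_1,\dots,\lambda_t,0,\dots,0)$ with $\lambda_i>0$ for $i\le t$, there are indices $1=i_1<\dots<i_{t+1}=n+1$ with $\lambda_k=\mu_{i_k}+\dots+\mu_{i_{k+1}-1}$. $\Lambda(n,r)_{\preceq\lambda}=\{\mu\in\Lambda(n,r):\mu\preceq\lambda\}$. A quasi-ribbon tableau of shape $\alpha$ with entries in $\{1,\dots,n\}$ is a filling of the ribbon diagram of shape $\alpha$ such that entries weakly increase from left to right in each row and strictly increase from top to bottom in each column. The ribbon diagram has rows of lengths $\alpha_1,\dots,\alpha_k$ from top to bottom, where the first cell of each row lies directly below the last cell of the preceding row. $\mathrm{QRT}(n,\alpha)$ is the set of these. For $T\in\mathrm{QRT}(n,\alpha)$, $\mathrm{wt}(T)=(\mathrm{wt}(T)_1,\dots,\mathrm{wt}(T)_n)$,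 where $\mathrm{wt}(T)_i$ is the number of entries of $T$ equal to $i$. *)

theory Defs
  imports Main
begin

(* Compositions are lists; indices are 0-based (position k of a list is part k+1). *)

definition strong_comp :: "nat \<Rightarrow> nat list \<Rightarrow> bool" where
  "strong_comp r \<alpha> \<longleftrightarrow> (\<forall>a\<in>set \<alpha>. 0 < a) \<and> sum_list \<alpha> = r"

(* alpha^bullet : append n - l(alpha) zeros *)
definition pad :: "nat \<Rightarrow> nat list \<Rightarrow> nat list" where
  "pad n \<alpha> = \<alpha> @ replicate (n - length \<alpha>) 0"

definition Lambda :: "nat \<Rightarrow> nat \<Rightarrow> nat list set" where
  "Lambda n r = {\<mu>. length \<mu> = n \<and> sum_list \<mu> = r}"

definition refines :: "nat \<Rightarrow> nat list \<Rightarrow> nat list \<Rightarrow> bool" where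
  "refines n \<mu> lam \<longleftrightarrow> length \<mu> = n \<and> length lam = n \<and>
     (\<exists>t idx. t \<le> n \<and> (\<forall>k<t. 0 < lam ! k) \<and> (\<forall>k. t \<le> k \<and> k < n \<longrightarrow> lam ! k = 0) \<and>
        idx 0 = 0 \<and> idx t = n \<and> (\<forall>k<t. idx k < idx (Suc k)) \<and>
        (\<forall>k<t. lam ! k = (\<Sum>j\<in>{idx k..<idx (Suc k)}. \<mu> ! j)))"

definition Lambda_refining :: "nat \<Rightarrow> nat \<Rightarrow> nat list \<Rightarrow> nat list set" where
  "Lambda_refining n r lam = {\<mu> \<in> Lambda n r. refines n \<mu> lam}"

(* Ribbon diagram of shape alpha: row i (0-based, top to bottom) occupies columns
   row_start alpha i, ..., row_start alpha i + alpha_i - 1; the first cell of row i+1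
   lies directly below the last cell of row i. Cells are (row, column). *)
fun row_start :: "nat list \<Rightarrow> nat \<Rightarrow> nat" where
  "row_start \<alpha> 0 = 0"
| "row_start \<alpha> (Suc i) = row_start \<alpha> i + \<alpha> ! i - 1"

definition ribbon_cells :: "nat list \<Rightarrow> (nat \<times> nat) set" where
  "ribbon_cells \<alpha> = {(i, c). i < length \<alpha> \<and> row_start \<alpha> i \<le> c \<and> c < row_start \<alpha> i + \<alpha> ! i}"

definition QRT :: "nat \<Rightarrow> nat list \<Rightarrow> (nat \<times> nat \<Rightarrow> nat) set" where
  "QRT n \<alpha> = {T.
     (\<forall>x\<in>ribbon_cells \<alpha>. T x \<in> {1..n}) \<and>
     (\<forall>x. x \<notin> ribbon_cells \<alpha> \<longrightarrow> T x = 0) \<and>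
     (\<forall>i c c'. (i, c) \<in> ribbon_cells \<alpha> \<longrightarrow> (i, c') \<in> ribbon_cells \<alpha> \<longrightarrow> c \<le> c' \<longrightarrow> T (i, c) \<le> T (i, c')) \<and>
     (\<forall>i i' c. (i, c) \<in> ribbon_cells \<alpha> \<longrightarrow> (i', c) \<in> ribbon_cells \<alpha> \<longrightarrow> i < i' \<longrightarrow> T (i, c) < T (i', c))}"

definition wt :: "nat \<Rightarrow> nat list \<Rightarrow> (nat \<times> nat \<Rightarrow> nat) \<Rightarrow> nat list" where
  "wt n \<alpha> T = map (\<lambda>i. card {x \<in> ribbon_cells \<alpha>. T x = i}) [1..<n+1]"

end

theory Submission
  imports Defs
begin

text \<open>Reading a ribbon of shape \<open>\<alpha>\<close> from its first to its last cell moves one cell to the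
  right inside a row and one cell down at each row break, and the row breaks occur after
  \<open>\<alpha>\<^sub>1 + \<dots> + \<alpha>\<^sub>k\<close> cells, \<open>0 < k < \<ell>(\<alpha>)\<close>. So a quasi-ribbon tableau is the same as a
  weakly increasing word of length \<open>r\<close> over \<open>{1..n}\<close> that strictly increases across these
  positions. A weakly increasing word is determined by its content \<open>\<mu> = wt(T)\<close>, and it strictly
  increases at position \<open>s\<close> exactly when \<open>s\<close> is a partial sum of \<open>\<mu>\<close>. Finally \<open>\<mu>\<close> refines
  \<open>\<alpha>\<^sup>\<bullet>\<close> exactly when every partial sum of \<open>\<alpha>\<close> is a partial sum of \<open>\<mu>\<close>.\<close>

section \<open>Partial sums\<close>

definition partial_sum :: "nat list \<Rightarrow> nat \<Rightarrow> nat" where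
  "partial_sum xs k = sum_list (take k xs)"

lemma partial_sum_0 [simp]: "partial_sum xs 0 = 0"
  by (simp add: partial_sum_def)

lemma partial_sum_Suc: "k < length xs \<Longrightarrow> partial_sum xs (Suc k) = partial_sum xs k + xs ! k"
  by (simp add: partial_sum_def take_Suc_conv_app_nth)

lemma partial_sum_length: "length xs \<le> k \<Longrightarrow> partial_sum xs k = sum_list xs"
  by (simp add: partial_sum_def)

lemma partial_sum_mono: "i \<le> j \<Longrightarrow> partial_sum xs i \<le> partial_sum xs j"
  by (auto simp: partial_sum_def le_iff_add take_add)

lemma partial_sum_add_interval:
  assumes "a \<le> b" "b \<le> length xs"
  shows "partial_sum xs b = partial_sum xs a + (\<Sum>j\<in>{a..<b}. xs ! j)"
proof -
  have sum_nth: "partial_sum xs k = (\<Sum>j\<in>{0..<k}. xs ! j)" if "k \<le> length xs" for k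
    using that by (simp add: partial_sum_def sum_list_sum_nth min_absorb1)
  show ?thesis
    using assms by (simp add: sum_nth sum.atLeastLessThan_concat)
qed

lemma partial_sum_strict_mono:
  assumes "\<forall>x\<in>set xs. 0 < x" "i < j" "j \<le> length xs"
  shows "partial_sum xs i < partial_sum xs j"
proof -
  have "partial_sum xs i < partial_sum xs (Suc i)"
    using assms partial_sum_Suc[of i xs] by simp
  also have "\<dots> \<le> partial_sum xs j"
    using assms(2) by (simp add: partial_sum_mono)
  finally show ?thesis .
qed

lemma le_partial_sum:
  assumes "\<forall>x\<in>set xs. 0 < x" "i \<le> length xs"
  shows "i \<le> partial_sum xs i"
  using assms(2)
proof (induction i)
  case (Suc i)
  then have "0 < xs ! i"
    using assms(1) by simp
  then show ?case
    using Suc partial_sum_Suc[of i xs] by simp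
qed simp

lemma partial_sum_interval_unique:
  assumes "partial_sum xs i \<le> p" "p < partial_sum xs (Suc i)"
    and "partial_sum xs i' \<le> p" "p < partial_sum xs (Suc i')"
  shows "i = i'"
proof (rule ccontr)
  assume "i \<noteq> i'"
  then have "Suc i \<le> i' \<or> Suc i' \<le> i"
    by linarith
  then show False
    using assms partial_sum_mono[of "Suc i" i' xs] partial_sum_mono[of "Suc i'" i xs] by auto
qed

lemma partial_sum_interval_exists:
  "p < sum_list xs \<Longrightarrow> \<exists>i<length xs. partial_sum xs i \<le> p \<and> p < partial_sum xs (Suc i)"
proof (induction xs arbitrary: p)
  case (Cons x xs)
  show ?case
  proof (cases "p < x")
    case True
    then show ?thesis
      by (intro exI[of _ 0]) (simp add: partial_sum_def)
  next
    case False
    then have "p - x < sum_list xs"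
      using Cons.prems by simp
    then obtain i where "i < length xs" "partial_sum xs i \<le> p - x" "p - x < partial_sum xs (Suc i)"
      using Cons.IH by blast
    moreover have "partial_sum (x # xs) (Suc k) = x + partial_sum xs k" for k
      by (simp add: partial_sum_def)
    ultimately show ?thesis
      using False by (intro exI[of _ "Suc i"]) auto
  qed
qed simp

lemma list_eqI_partial_sum:
  assumes "length xs = length ys" "\<And>j. j \<le> length xs \<Longrightarrow> partial_sum xs j = partial_sum ys j"
  shows "xs = ys"
proof (rule nth_equalityI)
  fix i assume "i < length xs"
  then show "xs ! i = ys ! i"
    using assms partial_sum_Suc[of i xs] partial_sum_Suc[of i ys] by simp
qed (fact assms(1))

lemma block_sums_iff_partial_sums:
  assumes "idx 0 = 0" "\<forall>k<m. idx k \<le> idx (Suc k)" "idx m \<le> length ys" "m \<le> length xs"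
  shows "(\<forall>k<m. xs ! k = (\<Sum>j\<in>{idx k..<idx (Suc k)}. ys ! j))
    \<longleftrightarrow> (\<forall>k\<le>m. partial_sum ys (idx k) = partial_sum xs k)"
proof -
  have idx_le: "idx k \<le> idx m" if "k \<le> m" for k
    by (rule lift_Suc_mono_le_ivl[of "{..<m}"]) (use assms(2) that in auto)
  have step: "partial_sum ys (idx (Suc k)) = partial_sum ys (idx k) + (\<Sum>j\<in>{idx k..<idx (Suc k)}. ys ! j)"
    if "k < m" for k
    using that assms(2,3) idx_le[of "Suc k"] by (intro partial_sum_add_interval) auto
  have step': "partial_sum xs (Suc k) = partial_sum xs k + xs ! k" if "k < m" for k
    using that assms(4) by (intro partial_sum_Suc) auto
  show ?thesis
  proof
    assume blocks: "\<forall>k<m. xs ! k = (\<Sum>j\<in>{idx k..<idx (Suc k)}. ys ! j)"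
    show "\<forall>k\<le>m. partial_sum ys (idx k) = partial_sum xs k"
    proof (intro allI impI)
      fix k assume "k \<le> m"
      then show "partial_sum ys (idx k) = partial_sum xs k"
        by (induction k) (use assms(1) blocks step step' in auto)
    qed
  next
    assume sums: "\<forall>k\<le>m. partial_sum ys (idx k) = partial_sum xs k"
    show "\<forall>k<m. xs ! k = (\<Sum>j\<in>{idx k..<idx (Suc k)}. ys ! j)"
    proof (intro allI impI)
      fix k assume "k < m"
      then show "xs ! k = (\<Sum>j\<in>{idx k..<idx (Suc k)}. ys ! j)"
        using sums step[of k] step'[of k] by simp
    qed
  qed
qed

lemma finite_down_closed_eq_lessThan_card:
  fixes A :: "nat set"
  assumes "finite A" and "\<And>q q'. q \<in> A \<Longrightarrow> q' \<le> q \<Longrightarrow> q' \<in> A"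
  shows "A = {..<card A}"
proof (cases "A = {}")
  case False
  have "A = {..Max A}"
  proof
    show "A \<subseteq> {..Max A}"
      using assms(1) by auto
    show "{..Max A} \<subseteq> A"
      using assms(2) Max_in[OF assms(1) False] by blast
  qed
  then show ?thesis
    by (metis card_atMost lessThan_Suc_atMost)
qed simp

section \<open>Sorted words and their content\<close>

definition sorted_words :: "nat \<Rightarrow> nat \<Rightarrow> (nat \<Rightarrow> nat) set" where
  "sorted_words n r = {W. W ` {..<r} \<subseteq> {1..n} \<and> mono_on {..<r} W \<and> (\<forall>p\<ge>r. W p = 0)}"

definition content :: "nat \<Rightarrow> nat \<Rightarrow> (nat \<Rightarrow> nat) \<Rightarrow> nat list" where
  "content n r W = map (\<lambda>v. card {p. p < r \<and> W p = v}) [1..<n+1]"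

lemma sorted_words_range: "W \<in> sorted_words n r \<Longrightarrow> p < r \<Longrightarrow> W p \<in> {1..n}"
  by (auto simp: sorted_words_def)

lemma length_content [simp]: "length (content n r W) = n"
  by (simp add: content_def)

lemma partial_sum_content:
  assumes "W ` {..<r} \<subseteq> {1..n}" "j \<le> n"
  shows "partial_sum (content n r W) j = card {p. p < r \<and> W p \<le> j}"
  using assms(2)
proof (induction j)
  case 0
  have "{p. p < r \<and> W p \<le> 0} = {}"
    using assms(1) by fastforce
  then show ?case
    by simp
next
  case (Suc j)
  have "partial_sum (content n r W) (Suc j) = partial_sum (content n r W) j + content n r W ! j"
    using Suc.prems by (simp add: partial_sum_Suc)
  also have "\<dots> = card {p. p < r \<and> W p \<le> j} + card {p. p < r \<and> W p = Suc j}"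
    using Suc by (simp add: content_def del: upt_Suc)
  also have "\<dots> = card ({p. p < r \<and> W p \<le> j} \<union> {p. p < r \<and> W p = Suc j})"
    by (rule card_Un_disjoint[symmetric]) auto
  also have "{p. p < r \<and> W p \<le> j} \<union> {p. p < r \<and> W p = Suc j} = {p. p < r \<and> W p \<le> Suc j}"
    by auto
  finally show ?case .
qed

text \<open>A sorted word is the word \<open>1\<^sup>\<mu>\<^sub>1 2\<^sup>\<mu>\<^sub>2 \<dots> n\<^sup>\<mu>\<^sub>n\<close> of its content
  \<open>\<mu>\<close>: the letter at position \<open>p\<close> is the least \<open>j\<close> with \<open>p < \<mu>\<^sub>1 + \<dots> + \<mu>\<^sub>j\<close>.\<close>

lemma sorted_words_le_iff:
  assumes "W \<in> sorted_words n r" "p < r" "j \<le> n"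
  shows "W p \<le> j \<longleftrightarrow> p < partial_sum (content n r W) j"
proof -
  define A where "A = {q. q < r \<and> W q \<le> j}"
  have "A = {..<card A}"
  proof (rule finite_down_closed_eq_lessThan_card)
    show "finite A"
      by (simp add: A_def)
    fix q q' assume "q \<in> A" "q' \<le> q"
    then show "q' \<in> A"
      using assms(1) mono_onD[of "{..<r}" W q' q] by (auto simp: A_def sorted_words_def)
  qed
  moreover have "card A = partial_sum (content n r W) j"
    using assms partial_sum_content by (simp add: A_def sorted_words_def)
  ultimately show ?thesis
    using assms(2) by (metis (mono_tags, lifting) A_def lessThan_iff mem_Collect_eq)
qed

lemma sorted_words_ascent_iff:
  assumes W: "W \<in> sorted_words n r" and s: "0 < s" "s < r"
  shows "W (s - 1) < W s \<longleftrightarrow> s \<in> partial_sum (content n r W) ` {..n}"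
proof
  assume ascent: "W (s - 1) < W s"
  have "W (s - 1) \<le> n"
    using sorted_words_range[OF W, of "s - 1"] s by simp
  then have "s - 1 < partial_sum (content n r W) (W (s - 1))"
    using sorted_words_le_iff[OF W, of "s - 1" "W (s - 1)"] s by simp
  moreover have "\<not> s < partial_sum (content n r W) (W (s - 1))"
    using sorted_words_le_iff[OF W s(2) \<open>W (s - 1) \<le> n\<close>] ascent by simp
  ultimately have "partial_sum (content n r W) (W (s - 1)) = s"
    by linarith
  then show "s \<in> partial_sum (content n r W) ` {..n}"
    using \<open>W (s - 1) \<le> n\<close> by force
next
  assume "s \<in> partial_sum (content n r W) ` {..n}"
  then obtain j where "j \<le> n" "partial_sum (content n r W) j = s"
    by auto
  then have "W (s - 1) \<le> j" "\<not> W s \<le> j"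
    using sorted_words_le_iff[OF W] s by simp_all
  then show "W (s - 1) < W s"
    by simp
qed

lemma content_in_Lambda:
  assumes "W \<in> sorted_words n r"
  shows "content n r W \<in> Lambda n r"
proof -
  have "{p. p < r \<and> W p \<le> n} = {..<r}"
    using assms by (auto simp: sorted_words_def)
  then have "partial_sum (content n r W) n = r"
    using assms partial_sum_content[of W r n n] by (simp add: sorted_words_def)
  then show ?thesis
    by (simp add: Lambda_def partial_sum_length)
qed

lemma inj_on_content: "inj_on (content n r) (sorted_words n r)"
proof (rule inj_onI)
  fix W W' assume W: "W \<in> sorted_words n r" and W': "W' \<in> sorted_words n r"
    and eq: "content n r W = content n r W'"
  show "W = W'"
  proof
    fix p
    show "W p = W' p"
    proof (cases "p < r")
      case True
      then have "W p \<le> n" "W' p \<le> n"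
        using sorted_words_range W W' by auto
      moreover have "W p \<le> j \<longleftrightarrow> W' p \<le> j" if "j \<le> n" for j
        using sorted_words_le_iff[OF W True that] sorted_words_le_iff[OF W' True that] eq by simp
      ultimately show ?thesis
        by (meson order_antisym order_refl)
    next
      case False
      then show ?thesis
        using W W' by (simp add: sorted_words_def)
    qed
  qed
qed

lemma content_surj:
  assumes \<mu>: "\<mu> \<in> Lambda n r"
  obtains W where "W \<in> sorted_words n r" "content n r W = \<mu>"
proof
  define W where "W p = (if p < r then LEAST j. p < partial_sum \<mu> j else 0)" for p
  have total: "partial_sum \<mu> n = r"
    using \<mu> by (simp add: Lambda_def partial_sum_length)
  have W_le_iff: "W p \<le> j \<longleftrightarrow> p < partial_sum \<mu> j" if "p < r" for p j
  proof
    have "p < partial_sum \<mu> (W p)"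
      unfolding W_def using that total LeastI[of "\<lambda>j. p < partial_sum \<mu> j" n] by simp
    moreover assume "W p \<le> j"
    ultimately show "p < partial_sum \<mu> j"
      using partial_sum_mono[of "W p" j \<mu>] by simp
  next
    assume "p < partial_sum \<mu> j"
    then show "W p \<le> j"
      unfolding W_def using that by (simp add: Least_le)
  qed
  show W_sorted: "W \<in> sorted_words n r"
    unfolding sorted_words_def
  proof (intro CollectI conjI)
    show "W ` {..<r} \<subseteq> {1..n}"
      using W_le_iff[of _ 0] W_le_iff[of _ n] total by (force simp: Suc_le_eq)
    show "mono_on {..<r} W"
      using W_le_iff by (intro mono_onI) (meson le_less_trans lessThan_iff order.refl)
    show "\<forall>p\<ge>r. W p = 0"
      by (simp add: W_def)
  qed
  show "content n r W = \<mu>"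
  proof (rule list_eqI_partial_sum)
    show "length (content n r W) = length \<mu>"
      using \<mu> by (simp add: Lambda_def)
    fix j assume "j \<le> length (content n r W)"
    then have j: "j \<le> n"
      by simp
    have "{p. p < r \<and> W p \<le> j} = {..<partial_sum \<mu> j}"
      using W_le_iff partial_sum_mono[OF j, of \<mu>] total by auto
    then show "partial_sum (content n r W) j = partial_sum \<mu> j"
      using W_sorted j partial_sum_content by (simp add: sorted_words_def)
  qed
qed

lemma bij_betw_content_ascents:
  assumes "D \<subseteq> {0<..<r}"
  shows "bij_betw (content n r) {W \<in> sorted_words n r. \<forall>s\<in>D. W (s - 1) < W s}
    {\<mu> \<in> Lambda n r. D \<subseteq> partial_sum \<mu> ` {..n}}"
  unfolding bij_betw_def
proof
  have ascents_iff: "(\<forall>s\<in>D. W (s - 1) < W s) \<longleftrightarrow> D \<subseteq> partial_sum (content n r W) ` {..n}"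
    if "W \<in> sorted_words n r" for W
    using sorted_words_ascent_iff[OF that] assms by (auto simp: subset_iff)
  show "inj_on (content n r) {W \<in> sorted_words n r. \<forall>s\<in>D. W (s - 1) < W s}"
    using inj_on_content by (rule inj_on_subset) blast
  show "content n r ` {W \<in> sorted_words n r. \<forall>s\<in>D. W (s - 1) < W s}
    = {\<mu> \<in> Lambda n r. D \<subseteq> partial_sum \<mu> ` {..n}}"
  proof (intro equalityI subsetI)
    fix \<mu> assume "\<mu> \<in> content n r ` {W \<in> sorted_words n r. \<forall>s\<in>D. W (s - 1) < W s}"
    then obtain W where "W \<in> sorted_words n r" "\<forall>s\<in>D. W (s - 1) < W s" "\<mu> = content n r W"
      by blast
    then show "\<mu> \<in> {\<mu> \<in> Lambda n r. D \<subseteq> partial_sum \<mu> ` {..n}}"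
      using ascents_iff content_in_Lambda by blast
  next
    fix \<mu> assume "\<mu> \<in> {\<mu> \<in> Lambda n r. D \<subseteq> partial_sum \<mu> ` {..n}}"
    then have \<mu>: "\<mu> \<in> Lambda n r" "D \<subseteq> partial_sum \<mu> ` {..n}"
      by simp_all
    then obtain W where W: "W \<in> sorted_words n r" "content n r W = \<mu>"
      using content_surj by blast
    then show "\<mu> \<in> content n r ` {W \<in> sorted_words n r. \<forall>s\<in>D. W (s - 1) < W s}"
      using ascents_iff \<mu>(2) by blast
  qed
qed

section \<open>Reading words of quasi-ribbon tableaux\<close>

definition descent_set :: "nat list \<Rightarrow> nat set" where
  "descent_set \<alpha> = partial_sum \<alpha> ` {0<..<length \<alpha>}"

text \<open>Walking along a ribbon from its first cell, every step goes one cell right or one cell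
  down, so the cell \<open>(i, c)\<close> is visited at step \<open>i + c\<close>.\<close>

definition ribbon_pos :: "nat \<times> nat \<Rightarrow> nat" where
  "ribbon_pos x = fst x + snd x"

definition ribbon_cell :: "nat list \<Rightarrow> nat \<Rightarrow> nat \<times> nat" where
  "ribbon_cell \<alpha> = inv_into (ribbon_cells \<alpha>) ribbon_pos"

definition reading_word :: "nat list \<Rightarrow> (nat \<times> nat \<Rightarrow> nat) \<Rightarrow> nat \<Rightarrow> nat" where
  "reading_word \<alpha> T p = (if p < sum_list \<alpha> then T (ribbon_cell \<alpha> p) else 0)"

definition ribbon_filling :: "nat list \<Rightarrow> (nat \<Rightarrow> nat) \<Rightarrow> nat \<times> nat \<Rightarrow> nat" where
  "ribbon_filling \<alpha> W x = (if x \<in> ribbon_cells \<alpha> then W (ribbon_pos x) else 0)"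

lemma QRT_D:
  assumes "T \<in> QRT n \<alpha>"
  shows QRT_range: "x \<in> ribbon_cells \<alpha> \<Longrightarrow> T x \<in> {1..n}"
    and QRT_outside: "x \<notin> ribbon_cells \<alpha> \<Longrightarrow> T x = 0"
    and QRT_row: "(i, c) \<in> ribbon_cells \<alpha> \<Longrightarrow> (i, c') \<in> ribbon_cells \<alpha> \<Longrightarrow> c \<le> c'
      \<Longrightarrow> T (i, c) \<le> T (i, c')"
    and QRT_col: "(i, c) \<in> ribbon_cells \<alpha> \<Longrightarrow> (i', c) \<in> ribbon_cells \<alpha> \<Longrightarrow> i < i'
      \<Longrightarrow> T (i, c) < T (i', c)"
  using assms unfolding QRT_def mem_Collect_eq by blast+

locale strong_composition =
  fixes \<alpha> :: "nat list"
  assumes parts_pos: "\<forall>a\<in>set \<alpha>. 0 < a"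
begin

lemma descent_set_subset: "descent_set \<alpha> \<subseteq> {0<..<sum_list \<alpha>}"
  using partial_sum_strict_mono[OF parts_pos] partial_sum_length[of \<alpha> "length \<alpha>"]
  by (fastforce simp: descent_set_def)

lemma mem_descent_set_iff:
  "s \<in> descent_set \<alpha> \<longleftrightarrow> (\<exists>k. 0 < k \<and> k < length \<alpha> \<and> s = partial_sum \<alpha> k)"
  by (auto simp: descent_set_def)

lemma row_start_eq: "i \<le> length \<alpha> \<Longrightarrow> row_start \<alpha> i = partial_sum \<alpha> i - i"
proof (induction i)
  case (Suc i)
  then show ?case
    using partial_sum_Suc[of i \<alpha>] le_partial_sum[OF parts_pos, of i] parts_pos by simp
qed simp

lemma mem_ribbon_cells_iff:
  "(i, c) \<in> ribbon_cells \<alpha> \<longleftrightarrow>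
    i < length \<alpha> \<and> partial_sum \<alpha> i \<le> i + c \<and> i + c < partial_sum \<alpha> (Suc i)"
proof -
  have "row_start \<alpha> i = partial_sum \<alpha> i - i \<and> i \<le> partial_sum \<alpha> i
      \<and> partial_sum \<alpha> (Suc i) = partial_sum \<alpha> i + \<alpha> ! i" if "i < length \<alpha>"
    using that row_start_eq le_partial_sum[OF parts_pos] partial_sum_Suc by simp
  then show ?thesis
    unfolding ribbon_cells_def by auto
qed

lemma bij_betw_ribbon_pos: "bij_betw ribbon_pos (ribbon_cells \<alpha>) {..<sum_list \<alpha>}"
  unfolding bij_betw_def
proof
  show "inj_on ribbon_pos (ribbon_cells \<alpha>)"
  proof (rule inj_onI)
    fix x y assume "x \<in> ribbon_cells \<alpha>" "y \<in> ribbon_cells \<alpha>" "ribbon_pos x = ribbon_pos y"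
    moreover obtain i c i' c' where "x = (i, c)" "y = (i', c')"
      by fastforce
    ultimately show "x = y"
      using partial_sum_interval_unique[of \<alpha> i "i + c" i'] by (auto simp: mem_ribbon_cells_iff ribbon_pos_def)
  qed
  show "ribbon_pos ` ribbon_cells \<alpha> = {..<sum_list \<alpha>}"
  proof (intro equalityI subsetI)
    fix p assume "p \<in> ribbon_pos ` ribbon_cells \<alpha>"
    then obtain i c where "(i, c) \<in> ribbon_cells \<alpha>" "p = i + c"
      by (auto simp: ribbon_pos_def)
    then show "p \<in> {..<sum_list \<alpha>}"
      using partial_sum_mono[of "Suc i" "length \<alpha>" \<alpha>] partial_sum_length[of \<alpha>]
      by (auto simp: mem_ribbon_cells_iff)
  next
    fix p assume "p \<in> {..<sum_list \<alpha>}"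
    then obtain i where i: "i < length \<alpha>" "partial_sum \<alpha> i \<le> p" "p < partial_sum \<alpha> (Suc i)"
      using partial_sum_interval_exists by blast
    moreover have "i \<le> p"
      using i le_partial_sum[OF parts_pos, of i] by simp
    ultimately have "(i, p - i) \<in> ribbon_cells \<alpha>" "ribbon_pos (i, p - i) = p"
      by (simp_all add: mem_ribbon_cells_iff ribbon_pos_def)
    then show "p \<in> ribbon_pos ` ribbon_cells \<alpha>"
      by (metis image_eqI)
  qed
qed

lemma ribbon_cell_in: "p < sum_list \<alpha> \<Longrightarrow> ribbon_cell \<alpha> p \<in> ribbon_cells \<alpha>"
  using bij_betw_ribbon_pos unfolding ribbon_cell_def bij_betw_def by (metis inv_into_into lessThan_iff)

lemma ribbon_pos_ribbon_cell: "p < sum_list \<alpha> \<Longrightarrow> ribbon_pos (ribbon_cell \<alpha> p) = p"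
  using bij_betw_inv_into_right[OF bij_betw_ribbon_pos] by (simp add: ribbon_cell_def)

lemma ribbon_cell_ribbon_pos: "x \<in> ribbon_cells \<alpha> \<Longrightarrow> ribbon_cell \<alpha> (ribbon_pos x) = x"
  using bij_betw_inv_into_left[OF bij_betw_ribbon_pos] by (simp add: ribbon_cell_def)

lemma ribbon_pos_less: "x \<in> ribbon_cells \<alpha> \<Longrightarrow> ribbon_pos x < sum_list \<alpha>"
  using bij_betw_ribbon_pos by (auto simp: bij_betw_def)

lemma ribbon_cell_Suc:
  assumes "ribbon_cell \<alpha> p = (i, c)" "Suc p < sum_list \<alpha>"
  shows "ribbon_cell \<alpha> (Suc p) = (if Suc p \<in> descent_set \<alpha> then (Suc i, c) else (i, Suc c))"
proof -
  have "p < sum_list \<alpha>"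
    using assms(2) by simp
  then have "(i, c) \<in> ribbon_cells \<alpha>" "i + c = p"
    using assms(1) ribbon_cell_in[of p] ribbon_pos_ribbon_cell[of p] by (simp_all add: ribbon_pos_def)
  then have i: "i < length \<alpha>" "partial_sum \<alpha> i \<le> p" "p < partial_sum \<alpha> (Suc i)"
    by (auto simp: mem_ribbon_cells_iff)
  show ?thesis
  proof (cases "Suc p < partial_sum \<alpha> (Suc i)")
    case True
    have "Suc p \<notin> descent_set \<alpha>"
    proof
      assume "Suc p \<in> descent_set \<alpha>"
      then obtain k where "k < length \<alpha>" "Suc p = partial_sum \<alpha> k"
        by (auto simp: mem_descent_set_iff)
      then show False
        using True i partial_sum_mono[of k i \<alpha>] partial_sum_mono[of "Suc i" k \<alpha>]
        by (cases "k \<le> i") auto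
    qed
    moreover have "(i, Suc c) \<in> ribbon_cells \<alpha>"
      using i True \<open>i + c = p\<close> by (simp add: mem_ribbon_cells_iff)
    ultimately show ?thesis
      using ribbon_cell_ribbon_pos[of "(i, Suc c)"] \<open>i + c = p\<close> by (simp add: ribbon_pos_def)
  next
    case False
    then have boundary: "Suc p = partial_sum \<alpha> (Suc i)"
      using i by simp
    have "Suc i \<noteq> length \<alpha>"
      using boundary assms(2) partial_sum_length[of \<alpha> "length \<alpha>"] by auto
    then have "Suc i < length \<alpha>"
      using i by simp
    then have "Suc p \<in> descent_set \<alpha>" "(Suc i, c) \<in> ribbon_cells \<alpha>"
      using boundary \<open>i + c = p\<close> partial_sum_strict_mono[OF parts_pos, of "Suc i" "Suc (Suc i)"]
      by (auto simp: mem_descent_set_iff mem_ribbon_cells_iff)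
    then show ?thesis
      using ribbon_cell_ribbon_pos[of "(Suc i, c)"] \<open>i + c = p\<close> by (simp add: ribbon_pos_def)
  qed
qed

lemma reading_word_QRT:
  assumes T: "T \<in> QRT n \<alpha>"
  shows "reading_word \<alpha> T \<in> sorted_words n (sum_list \<alpha>)"
    and "\<forall>s\<in>descent_set \<alpha>. reading_word \<alpha> T (s - 1) < reading_word \<alpha> T s"
proof -
  let ?W = "reading_word \<alpha> T"
  have step: "?W p \<le> ?W (Suc p) \<and> (Suc p \<in> descent_set \<alpha> \<longrightarrow> ?W p < ?W (Suc p))"
    if p: "Suc p < sum_list \<alpha>" for p
  proof -
    obtain i c where x: "ribbon_cell \<alpha> p = (i, c)"
      by fastforce
    have "(i, c) \<in> ribbon_cells \<alpha>" "ribbon_cell \<alpha> (Suc p) \<in> ribbon_cells \<alpha>"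
      using p x ribbon_cell_in[of p] ribbon_cell_in[of "Suc p"] by auto
    then show ?thesis
      using p x ribbon_cell_Suc[OF x p] QRT_row[OF T, of i c "Suc c"] QRT_col[OF T, of i c "Suc i"]
      by (simp add: reading_word_def split: if_splits)
  qed
  have mono: "?W p \<le> ?W q" if "p \<le> q" "q < sum_list \<alpha>" for p q
  proof (rule lift_Suc_mono_le_ivl[of "{p. Suc p < sum_list \<alpha>}" ?W])
    show "?W k \<le> ?W (Suc k)" if "k \<in> {p. Suc p < sum_list \<alpha>}" for k
      using step that by blast
  qed (use that in auto)
  show "?W \<in> sorted_words n (sum_list \<alpha>)"
    unfolding sorted_words_def
  proof (intro CollectI conjI)
    show "?W ` {..<sum_list \<alpha>} \<subseteq> {1..n}"
      using QRT_range[OF T] ribbon_cell_in by (simp add: reading_word_def image_subset_iff)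
    show "mono_on {..<sum_list \<alpha>} ?W"
      using mono by (intro mono_onI) simp
    show "\<forall>p\<ge>sum_list \<alpha>. ?W p = 0"
      by (simp add: reading_word_def)
  qed
  show "\<forall>s\<in>descent_set \<alpha>. ?W (s - 1) < ?W s"
  proof
    fix s assume s: "s \<in> descent_set \<alpha>"
    then have "0 < s" "s < sum_list \<alpha>"
      using descent_set_subset by auto
    then show "?W (s - 1) < ?W s"
      using s step[of "s - 1"] by simp
  qed
qed

lemma ribbon_filling_QRT:
  assumes W: "W \<in> sorted_words n (sum_list \<alpha>)" and ascents: "\<forall>s\<in>descent_set \<alpha>. W (s - 1) < W s"
  shows "ribbon_filling \<alpha> W \<in> QRT n \<alpha>"
proof -
  have mono: "W p \<le> W q" if "p \<le> q" "q < sum_list \<alpha>" for p q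
    using W that by (auto simp: sorted_words_def intro: mono_onD)
  have col: "W (i + c) < W (i' + c)"
    if x: "(i, c) \<in> ribbon_cells \<alpha>" and y: "(i', c) \<in> ribbon_cells \<alpha>" and "i < i'" for i i' c
  proof -
    define s where "s = partial_sum \<alpha> (Suc i)"
    have "i + c < s" "s \<le> i' + c" "i' < length \<alpha>"
      using x y \<open>i < i'\<close> partial_sum_mono[of "Suc i" i' \<alpha>] by (auto simp: mem_ribbon_cells_iff s_def)
    moreover have "i' + c < sum_list \<alpha>"
      using ribbon_pos_less[OF y] by (simp add: ribbon_pos_def)
    moreover have "s \<in> descent_set \<alpha>"
      using \<open>i < i'\<close> \<open>i' < length \<alpha>\<close> unfolding mem_descent_set_iff s_def
      by (intro exI[of _ "Suc i"]) simp
    ultimately show ?thesis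
      using ascents mono[of "i + c" "s - 1"] mono[of s "i' + c"] by fastforce
  qed
  show ?thesis
    unfolding QRT_def mem_Collect_eq
  proof (intro conjI allI impI ballI)
    fix x assume "x \<in> ribbon_cells \<alpha>"
    then show "ribbon_filling \<alpha> W x \<in> {1..n}"
      using sorted_words_range[OF W] ribbon_pos_less by (simp add: ribbon_filling_def)
  next
    fix i c c' assume "(i, c) \<in> ribbon_cells \<alpha>" "(i, c') \<in> ribbon_cells \<alpha>" "c \<le> c'"
    then show "ribbon_filling \<alpha> W (i, c) \<le> ribbon_filling \<alpha> W (i, c')"
      using mono[of "i + c" "i + c'"] ribbon_pos_less[of "(i, c')"] by (simp add: ribbon_filling_def ribbon_pos_def)
  next
    fix i i' c assume "(i, c) \<in> ribbon_cells \<alpha>" "(i', c) \<in> ribbon_cells \<alpha>" "i < i'"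
    then show "ribbon_filling \<alpha> W (i, c) < ribbon_filling \<alpha> W (i', c)"
      using col by (simp add: ribbon_filling_def ribbon_pos_def)
  qed (simp add: ribbon_filling_def)
qed

lemma bij_betw_reading_word:
  "bij_betw (reading_word \<alpha>) (QRT n \<alpha>)
    {W \<in> sorted_words n (sum_list \<alpha>). \<forall>s\<in>descent_set \<alpha>. W (s - 1) < W s}"
proof (rule bij_betw_byWitness[where f' = "ribbon_filling \<alpha>"])
  show "\<forall>T\<in>QRT n \<alpha>. ribbon_filling \<alpha> (reading_word \<alpha> T) = T"
  proof (intro ballI ext)
    fix T x assume "T \<in> QRT n \<alpha>"
    then show "ribbon_filling \<alpha> (reading_word \<alpha> T) x = T x"
      using ribbon_pos_less[of x] ribbon_cell_ribbon_pos[of x] QRT_outside[of T n \<alpha> x]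
      by (simp add: ribbon_filling_def reading_word_def)
  qed
  show "\<forall>W\<in>{W \<in> sorted_words n (sum_list \<alpha>). \<forall>s\<in>descent_set \<alpha>. W (s - 1) < W s}.
      reading_word \<alpha> (ribbon_filling \<alpha> W) = W"
  proof (intro ballI ext)
    fix W p assume "W \<in> {W \<in> sorted_words n (sum_list \<alpha>). \<forall>s\<in>descent_set \<alpha>. W (s - 1) < W s}"
    then show "reading_word \<alpha> (ribbon_filling \<alpha> W) p = W p"
      using ribbon_cell_in[of p] ribbon_pos_ribbon_cell[of p]
      by (cases "p < sum_list \<alpha>") (simp_all add: ribbon_filling_def reading_word_def sorted_words_def)
  qed
  show "reading_word \<alpha> ` QRT n \<alpha>
      \<subseteq> {W \<in> sorted_words n (sum_list \<alpha>). \<forall>s\<in>descent_set \<alpha>. W (s - 1) < W s}"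
    using reading_word_QRT by (intro image_subsetI) simp
  show "ribbon_filling \<alpha> ` {W \<in> sorted_words n (sum_list \<alpha>). \<forall>s\<in>descent_set \<alpha>. W (s - 1) < W s}
      \<subseteq> QRT n \<alpha>"
    using ribbon_filling_QRT by (intro image_subsetI) simp
qed

lemma wt_eq_content_reading_word: "wt n \<alpha> T = content n (sum_list \<alpha>) (reading_word \<alpha> T)"
  unfolding wt_def content_def
proof (rule map_cong[OF refl])
  fix v
  have "{p. p < sum_list \<alpha> \<and> reading_word \<alpha> T p = v} = ribbon_pos ` {x \<in> ribbon_cells \<alpha>. T x = v}"
  proof (intro equalityI subsetI)
    fix p assume "p \<in> {p. p < sum_list \<alpha> \<and> reading_word \<alpha> T p = v}"
    then have "p < sum_list \<alpha>" "T (ribbon_cell \<alpha> p) = v"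
      by (auto simp: reading_word_def)
    then show "p \<in> ribbon_pos ` {x \<in> ribbon_cells \<alpha>. T x = v}"
      using ribbon_cell_in ribbon_pos_ribbon_cell by (intro image_eqI[of _ _ "ribbon_cell \<alpha> p"]) auto
  next
    fix p assume "p \<in> ribbon_pos ` {x \<in> ribbon_cells \<alpha>. T x = v}"
    then obtain x where "x \<in> ribbon_cells \<alpha>" "T x = v" "p = ribbon_pos x"
      by blast
    then show "p \<in> {p. p < sum_list \<alpha> \<and> reading_word \<alpha> T p = v}"
      using ribbon_pos_less ribbon_cell_ribbon_pos by (simp add: reading_word_def)
  qed
  moreover have "inj_on ribbon_pos {x \<in> ribbon_cells \<alpha>. T x = v}"
    using bij_betw_imp_inj_on[OF bij_betw_ribbon_pos] by (rule inj_on_subset) blast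
  ultimately show "card {x \<in> ribbon_cells \<alpha>. T x = v}
      = card {p. p < sum_list \<alpha> \<and> reading_word \<alpha> T p = v}"
    by (simp add: card_image)
qed

end

section \<open>Refinements of a padded composition\<close>

lemma pad_nth: "k < n \<Longrightarrow> pad n \<alpha> ! k = (if k < length \<alpha> then \<alpha> ! k else 0)"
  by (auto simp: pad_def nth_append)

context strong_composition
begin

lemma refines_pad_iff_blocks:
  assumes "length \<alpha> \<le> n"
  shows "refines n \<mu> (pad n \<alpha>) \<longleftrightarrow> length \<mu> = n \<and>
    (\<exists>idx. idx 0 = 0 \<and> idx (length \<alpha>) = n \<and> (\<forall>k<length \<alpha>. idx k < idx (Suc k)) \<and>
      (\<forall>k<length \<alpha>. \<alpha> ! k = (\<Sum>j\<in>{idx k..<idx (Suc k)}. \<mu> ! j)))"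
proof -
  have length_pad: "length (pad n \<alpha>) = n"
    using assms by (simp add: pad_def)
  have pad_pos: "0 < pad n \<alpha> ! k" if "k < length \<alpha>" for k
    using that assms parts_pos pad_nth[of k n \<alpha>] by simp
  have pad_zero: "pad n \<alpha> ! k = 0" if "length \<alpha> \<le> k" "k < n" for k
    using that pad_nth[of k n \<alpha>] by simp
  have support: "t = length \<alpha>"
    if "\<forall>k<t. 0 < pad n \<alpha> ! k" "\<forall>k. t \<le> k \<and> k < n \<longrightarrow> pad n \<alpha> ! k = 0" "t \<le> n" for t
  proof (rule ccontr)
    assume "t \<noteq> length \<alpha>"
    then consider "t < length \<alpha>" | "length \<alpha> < t"
      by linarith
    then show False
      using that assms pad_pos[of t] pad_zero[of "length \<alpha>"] by cases auto
  qed
  have pad_eq: "pad n \<alpha> ! k = \<alpha> ! k" if "k < length \<alpha>" for k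
    using that assms pad_nth[of k n \<alpha>] by simp
  show ?thesis
  proof
    assume "refines n \<mu> (pad n \<alpha>)"
    then obtain t idx where len: "length \<mu> = n" and t: "t \<le> n" "\<forall>k<t. 0 < pad n \<alpha> ! k"
      "\<forall>k. t \<le> k \<and> k < n \<longrightarrow> pad n \<alpha> ! k = 0"
      and idx: "idx 0 = 0" "idx t = n" "\<forall>k<t. idx k < idx (Suc k)"
      "\<forall>k<t. pad n \<alpha> ! k = (\<Sum>j\<in>{idx k..<idx (Suc k)}. \<mu> ! j)"
      unfolding refines_def by blast
    have "t = length \<alpha>"
      using support[OF t(2,3,1)] .
    then show "length \<mu> = n \<and> (\<exists>idx. idx 0 = 0 \<and> idx (length \<alpha>) = n \<and>
      (\<forall>k<length \<alpha>. idx k < idx (Suc k)) \<and>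
      (\<forall>k<length \<alpha>. \<alpha> ! k = (\<Sum>j\<in>{idx k..<idx (Suc k)}. \<mu> ! j)))"
      using len idx pad_eq by (intro conjI exI[of _ idx]) auto
  next
    assume "length \<mu> = n \<and> (\<exists>idx. idx 0 = 0 \<and> idx (length \<alpha>) = n \<and>
      (\<forall>k<length \<alpha>. idx k < idx (Suc k)) \<and>
      (\<forall>k<length \<alpha>. \<alpha> ! k = (\<Sum>j\<in>{idx k..<idx (Suc k)}. \<mu> ! j)))"
    then obtain idx where len: "length \<mu> = n"
      and idx: "idx 0 = 0" "idx (length \<alpha>) = n" "\<forall>k<length \<alpha>. idx k < idx (Suc k)"
      "\<forall>k<length \<alpha>. \<alpha> ! k = (\<Sum>j\<in>{idx k..<idx (Suc k)}. \<mu> ! j)"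
      by blast
    show "refines n \<mu> (pad n \<alpha>)"
      unfolding refines_def
      using assms len length_pad pad_pos pad_zero pad_eq idx
      by (intro conjI exI[of _ "length \<alpha>"] exI[of _ idx]) auto
  qed
qed

text \<open>For \<open>\<alpha> = []\<close> the right-hand side always holds, but refinement forces \<open>n = 0\<close>.\<close>

lemma refines_pad_iff:
  assumes "\<alpha> \<noteq> []" "length \<alpha> \<le> n" and \<mu>: "\<mu> \<in> Lambda n (sum_list \<alpha>)"
  shows "refines n \<mu> (pad n \<alpha>) \<longleftrightarrow> descent_set \<alpha> \<subseteq> partial_sum \<mu> ` {..n}"
proof -
  have len: "length \<mu> = n"
    using \<mu> by (simp add: Lambda_def)
  have total: "partial_sum \<mu> n = partial_sum \<alpha> (length \<alpha>)"
    using \<mu> by (simp add: Lambda_def partial_sum_length)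
  have blocks_iff: "(\<forall>k<length \<alpha>. \<alpha> ! k = (\<Sum>j\<in>{idx k..<idx (Suc k)}. \<mu> ! j))
      \<longleftrightarrow> (\<forall>k\<le>length \<alpha>. partial_sum \<mu> (idx k) = partial_sum \<alpha> k)"
    if "idx 0 = 0" "idx (length \<alpha>) = n" "\<forall>k<length \<alpha>. idx k < idx (Suc k)" for idx
    using that len by (intro block_sums_iff_partial_sums) auto
  show ?thesis
  proof
    assume "refines n \<mu> (pad n \<alpha>)"
    then obtain idx where idx: "idx 0 = 0" "idx (length \<alpha>) = n" "\<forall>k<length \<alpha>. idx k < idx (Suc k)"
      and blocks: "\<forall>k<length \<alpha>. \<alpha> ! k = (\<Sum>j\<in>{idx k..<idx (Suc k)}. \<mu> ! j)"
      unfolding refines_pad_iff_blocks[OF assms(2)] by blast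
    have sums: "\<forall>k\<le>length \<alpha>. partial_sum \<mu> (idx k) = partial_sum \<alpha> k"
      using blocks_iff[OF idx] blocks by simp
    have idx_le: "idx k \<le> n" if "k \<le> length \<alpha>" for k
    proof -
      have "idx k \<le> idx (length \<alpha>)"
        by (rule lift_Suc_mono_le_ivl[of "{..<length \<alpha>}" idx]) (use idx(3) that in auto)
      then show ?thesis
        using idx(2) by simp
    qed
    show "descent_set \<alpha> \<subseteq> partial_sum \<mu> ` {..n}"
    proof
      fix s assume "s \<in> descent_set \<alpha>"
      then obtain k where "k < length \<alpha>" "s = partial_sum \<alpha> k"
        by (auto simp: mem_descent_set_iff)
      then show "s \<in> partial_sum \<mu> ` {..n}"
        using sums idx_le[of k] by (intro image_eqI[of _ _ "idx k"]) auto
    qed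
  next
    assume descents: "descent_set \<alpha> \<subseteq> partial_sum \<mu> ` {..n}"
    have ex: "\<exists>j. partial_sum \<mu> j = partial_sum \<alpha> k" if "0 < k" "k < length \<alpha>" for k
    proof -
      have "partial_sum \<alpha> k \<in> descent_set \<alpha>"
        using that by (auto simp: mem_descent_set_iff)
      then show ?thesis
        using descents by (metis imageE subsetD)
    qed
    define idx where
      "idx k = (if k = 0 then 0 else if k < length \<alpha> then SOME j. partial_sum \<mu> j = partial_sum \<alpha> k else n)"
      for k
    have sums: "partial_sum \<mu> (idx k) = partial_sum \<alpha> k" if "k \<le> length \<alpha>" for k
      using that total someI_ex[OF ex[of k]] by (simp add: idx_def)
    have strict: "\<forall>k<length \<alpha>. idx k < idx (Suc k)"
    proof (intro allI impI, rule ccontr)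
      fix k assume k: "k < length \<alpha>" and "\<not> idx k < idx (Suc k)"
      then have "partial_sum \<mu> (idx (Suc k)) \<le> partial_sum \<mu> (idx k)"
        by (simp add: partial_sum_mono)
      then show False
        using k sums[of k] sums[of "Suc k"] partial_sum_strict_mono[OF parts_pos, of k "Suc k"] by simp
    qed
    have idx: "idx 0 = 0" "idx (length \<alpha>) = n"
      using assms(1) by (simp_all add: idx_def)
    have "\<forall>k<length \<alpha>. \<alpha> ! k = (\<Sum>j\<in>{idx k..<idx (Suc k)}. \<mu> ! j)"
      using blocks_iff[OF idx strict] sums by blast
    then show "refines n \<mu> (pad n \<alpha>)"
      unfolding refines_pad_iff_blocks[OF assms(2)] using len idx strict by blast
  qed
qed

end

theorem mainTheorem6:
  fixes n r :: nat and \<alpha> :: "nat list"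
  assumes "strong_comp r \<alpha>" and "0 < r" and "length \<alpha> \<le> n"
  shows "bij_betw (wt n \<alpha>) (QRT n \<alpha>) (Lambda_refining n r (pad n \<alpha>))"
proof -
  interpret strong_composition \<alpha>
    using assms(1) by unfold_locales (simp add: strong_comp_def)
  have r: "sum_list \<alpha> = r"
    using assms(1) by (simp add: strong_comp_def)
  then have "\<alpha> \<noteq> []"
    using assms(2) by auto
  have "bij_betw (content n r \<circ> reading_word \<alpha>) (QRT n \<alpha>)
      {\<mu> \<in> Lambda n r. descent_set \<alpha> \<subseteq> partial_sum \<mu> ` {..n}}"
    using bij_betw_trans[OF bij_betw_reading_word bij_betw_content_ascents[OF descent_set_subset]] r
    by simp
  moreover have "{\<mu> \<in> Lambda n r. descent_set \<alpha> \<subseteq> partial_sum \<mu> ` {..n}} = Lambda_refining n r (pad n \<alpha>)"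
    using refines_pad_iff[OF \<open>\<alpha> \<noteq> []\<close> assms(3)] r unfolding Lambda_refining_def by blast
  moreover have "wt n \<alpha> = content n r \<circ> reading_word \<alpha>"
    using wt_eq_content_reading_word r by fastforce
  ultimately show ?thesis
    by simp
qed

end
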